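(* Let $d\ge0$ and let $f\colon\{0,1\}^m\to\{0,1\}^n$ be a $d$-local function. Then there exist a set $S\subseteq[m]$ and numbers $r,t$ with $$|S|\le\frac{r}{2^{28t-18}},\qquad r\ge\frac{n}{\mathrm{tow}_2(16d)},\qquad t\le\mathrm{tow}_2(16d),$$ such that for every fixing $\rho\in\{0,1\}^S$ of the input bits in $S$, the restricted function $f_\rho\colon\{0,1\}^{[m]\setminus S}\to\{0,1\}^n$ is $(d,r,t)$-local.
   Context: A function is $d$-local if each output bit depends on at most $d$ input bits; $I_g(i)$ is the set of input coordinates on which output $i$ of $g$ depends. $f_\rho(z')=f(\rho,z')$. $N_g(i)=\{j: I_g(j)\cap I_g(i)\neq\emptyset\}$. Neighborhoods $N_g(i_1),\dots,N_g(i_r)$ are non-connected if the sets $\bigcup_{j\in N_g(i_a)}I_g(j)$ are pairwise disjoint. $g$ is $(d,r,t)$-local if it is $d$-local and has $r$ non-connected neighborhoods each of size at most $t$. $\mathrm{tow}_2(0)=1$, $\mathrm{tow}_2(h)=2^{\mathrm{tow}_2(h-1)}$. *)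

theory Defs
  imports Complex_Main
begin

text \<open>Inputs with coordinate set D: boolean assignments that are False outside D
  (so {0,1}^D is represented faithfully). Outputs are the bits 0..n-1 of a nat => bool.\<close>

definition inputs :: "nat set \<Rightarrow> (nat \<Rightarrow> bool) set" where
  "inputs D = {x. \<forall>k. k \<notin> D \<longrightarrow> \<not> x k}"

definition dep :: "((nat \<Rightarrow> bool) \<Rightarrow> (nat \<Rightarrow> bool)) \<Rightarrow> nat set \<Rightarrow> nat \<Rightarrow> nat set" where
  "dep g D i = {j \<in> D. \<exists>x \<in> inputs D. g x i \<noteq> g (x(j := \<not> x j)) i}"

definition is_local :: "((nat \<Rightarrow> bool) \<Rightarrow> (nat \<Rightarrow> bool)) \<Rightarrow> nat set \<Rightarrow> nat \<Rightarrow> nat \<Rightarrow> bool" where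
  "is_local g D n d \<longleftrightarrow> (\<forall>i<n. card (dep g D i) \<le> d)"

definition nbhd :: "((nat \<Rightarrow> bool) \<Rightarrow> (nat \<Rightarrow> bool)) \<Rightarrow> nat set \<Rightarrow> nat \<Rightarrow> nat \<Rightarrow> nat set" where
  "nbhd g D n i = {j. j < n \<and> dep g D j \<inter> dep g D i \<noteq> {}}"

definition nbhd_inputs :: "((nat \<Rightarrow> bool) \<Rightarrow> (nat \<Rightarrow> bool)) \<Rightarrow> nat set \<Rightarrow> nat \<Rightarrow> nat \<Rightarrow> nat set" where
  "nbhd_inputs g D n i = (\<Union>j \<in> nbhd g D n i. dep g D j)"

definition drt_local :: "((nat \<Rightarrow> bool) \<Rightarrow> (nat \<Rightarrow> bool)) \<Rightarrow> nat set \<Rightarrow> nat \<Rightarrow> nat \<Rightarrow> nat \<Rightarrow> nat \<Rightarrow> bool" where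
  "drt_local g D n d r t \<longleftrightarrow> is_local g D n d \<and>
     (\<exists>A \<subseteq> {..<n}. card A = r \<and> (\<forall>a \<in> A. card (nbhd g D n a) \<le> t) \<and>
        (\<forall>a \<in> A. \<forall>b \<in> A. a \<noteq> b \<longrightarrow> nbhd_inputs g D n a \<inter> nbhd_inputs g D n b = {}))"

definition restr :: "((nat \<Rightarrow> bool) \<Rightarrow> (nat \<Rightarrow> bool)) \<Rightarrow> nat set \<Rightarrow> (nat \<Rightarrow> bool) \<Rightarrow> (nat \<Rightarrow> bool) \<Rightarrow> (nat \<Rightarrow> bool)" where
  "restr f S \<rho> = (\<lambda>z. f (\<lambda>k. if k \<in> S then \<rho> k else z k))"

fun tow2 :: "nat \<Rightarrow> nat" where
  "tow2 0 = 1"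
| "tow2 (Suc h) = 2 ^ tow2 h"

end

theory Submission
  imports Defs "HOL-Library.Disjoint_Sets"
begin

text \<open>Thresholds
  0 = K 0 < K 1 < ... < K (d+1) are chosen growing like a tower.  Every output has at most d
  inputs, so for some j at least n/(d+1) outputs have no input whose degree lies in
  (K j, K (j+1)].  Fixing the at most n d / K (j+1) inputs of degree above K (j+1) leaves
  these outputs with neighbourhoods of size at most t = d K j.  A greedy phase then extracts
  outputs with pairwise disjoint neighbourhood inputs: while a maximal disjoint subfamily is
  too small, all inputs it covers are fixed, which shrinks every remaining neighbourhood, so
  at most d t rounds are needed.  The gap between K j and K (j+1) pays for all fixed inputs,
  and fixing inputs only removes dependencies, so the outputs stay isolated in every
  restriction.\<close>

section \<open>Neighbourhoods after fixing inputs\<close>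

lemma dep_restr_subset:
  assumes "S \<subseteq> D" and "\<rho> \<in> inputs S"
  shows "dep (restr f S \<rho>) (D - S) i \<subseteq> dep f D i - S"
proof
  fix j assume "j \<in> dep (restr f S \<rho>) (D - S) i"
  then obtain z where j: "j \<in> D - S" and z: "z \<in> inputs (D - S)"
    and flip: "restr f S \<rho> z i \<noteq> restr f S \<rho> (z(j := \<not> z j)) i"
    unfolding dep_def by auto
  define x where "x = (\<lambda>k. if k \<in> S then \<rho> k else z k)"
  have "x \<in> inputs D" using z assms unfolding x_def inputs_def by auto
  moreover have "(\<lambda>k. if k \<in> S then \<rho> k else (z(j := \<not> z j)) k) = x(j := \<not> x j)"
    using j unfolding x_def by (auto simp: fun_eq_iff)
  then have "f x i \<noteq> f (x(j := \<not> x j)) i"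
    using flip unfolding restr_def x_def by simp
  ultimately show "j \<in> dep f D i - S"
    using j unfolding dep_def by blast
qed

text \<open>N(b) and the inputs of its members, for the dependency sets e with the fixed inputs S
  removed; for e = dep f D they contain the corresponding sets of every restriction of f.\<close>

definition nbhd_avoiding :: "(nat \<Rightarrow> 'a set) \<Rightarrow> nat \<Rightarrow> 'a set \<Rightarrow> nat \<Rightarrow> nat set" where
  "nbhd_avoiding e n S b = {c. c < n \<and> (e c - S) \<inter> (e b - S) \<noteq> {}}"

definition nbhd_inputs_avoiding :: "(nat \<Rightarrow> 'a set) \<Rightarrow> nat \<Rightarrow> 'a set \<Rightarrow> nat \<Rightarrow> 'a set" where
  "nbhd_inputs_avoiding e n S b = (\<Union>c \<in> nbhd_avoiding e n S b. e c - S)"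

lemma nbhd_avoiding_antimono: "S \<subseteq> S' \<Longrightarrow> nbhd_avoiding e n S' b \<subseteq> nbhd_avoiding e n S b"
  unfolding nbhd_avoiding_def by auto

lemma nbhd_inputs_avoiding_antimono:
  "S \<subseteq> S' \<Longrightarrow> nbhd_inputs_avoiding e n S' b \<subseteq> nbhd_inputs_avoiding e n S b - S'"
  unfolding nbhd_inputs_avoiding_def nbhd_avoiding_def by blast

definition isolated_outputs :: "(nat \<Rightarrow> 'a set) \<Rightarrow> nat \<Rightarrow> 'a set \<Rightarrow> nat \<Rightarrow> nat set \<Rightarrow> bool" where
  "isolated_outputs e n S t A \<longleftrightarrow> A \<subseteq> {..<n} \<and> (\<forall>a\<in>A. card (nbhd_avoiding e n S a) \<le> t) \<and>
     disjoint_family_on (nbhd_inputs_avoiding e n S) A"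

lemma drt_local_restr:
  assumes loc: "is_local f D n d" and "finite D" and "S \<subseteq> D" and "\<rho> \<in> inputs S"
    and "isolated_outputs (dep f D) n S t A"
  shows "drt_local (restr f S \<rho>) (D - S) n d (card A) t"
proof -
  have "A \<subseteq> {..<n}" and nbhd_le: "\<forall>a\<in>A. card (nbhd_avoiding (dep f D) n S a) \<le> t"
    and disj: "disjoint_family_on (nbhd_inputs_avoiding (dep f D) n S) A"
    using assms(5) unfolding isolated_outputs_def by blast+
  define g where "g = restr f S \<rho>"
  have dep_sub: "dep g (D - S) i \<subseteq> dep f D i - S" for i
    unfolding g_def using dep_restr_subset[OF \<open>S \<subseteq> D\<close> \<open>\<rho> \<in> inputs S\<close>] .
  have fin: "finite (dep f D i)" for i
    using \<open>finite D\<close> unfolding dep_def by auto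
  have "card (dep g (D - S) i) \<le> d" if "i < n" for i
    using card_mono[OF fin, of "dep g (D - S) i"] dep_sub[of i] loc that
    unfolding is_local_def by fastforce
  then have local: "is_local g (D - S) n d"
    unfolding is_local_def by blast
  have "nbhd g (D - S) n a \<subseteq> nbhd_avoiding (dep f D) n S a" for a
    unfolding nbhd_def nbhd_avoiding_def using dep_sub by blast
  moreover have "finite (nbhd_avoiding (dep f D) n S a)" for a
    unfolding nbhd_avoiding_def by simp
  ultimately have card_le: "card (nbhd g (D - S) n a) \<le> t" if "a \<in> A" for a
    using card_mono nbhd_le that order_trans by metis
  have "nbhd_inputs g (D - S) n a \<subseteq> nbhd_inputs_avoiding (dep f D) n S a" for a
    unfolding nbhd_inputs_def nbhd_inputs_avoiding_def nbhd_def nbhd_avoiding_def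
    using dep_sub by blast
  then have disj': "nbhd_inputs g (D - S) n a \<inter> nbhd_inputs g (D - S) n b = {}"
    if "a \<in> A" "b \<in> A" "a \<noteq> b" for a b
    using disj that unfolding disjoint_family_on_def by blast
  have "drt_local g (D - S) n d (card A) t"
    unfolding drt_local_def
  proof (intro conjI exI[of _ A] ballI impI)
    show "card (nbhd g (D - S) n a) \<le> t" if "a \<in> A" for a
      using card_le that .
  qed (use local \<open>A \<subseteq> {..<n}\<close> disj' in auto)
  then show ?thesis
    unfolding g_def .
qed

section \<open>Degrees and bands\<close>

definition degree :: "(nat \<Rightarrow> 'a set) \<Rightarrow> nat \<Rightarrow> 'a \<Rightarrow> nat" where
  "degree e n x = card {i. i < n \<and> x \<in> e i}"

lemma sum_degree_eq:
  assumes "finite M"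
  shows "(\<Sum>x\<in>M. degree e n x) = (\<Sum>i<n. card (e i \<inter> M))"
proof -
  have "(\<Sum>x\<in>M. degree e n x) = (\<Sum>x\<in>M. \<Sum>i\<in>{i. i \<in> {..<n} \<and> x \<in> e i}. 1::nat)"
    unfolding degree_def by simp
  also have "\<dots> = (\<Sum>i<n. \<Sum>x\<in>{x. x \<in> M \<and> x \<in> e i}. 1::nat)"
    using assms by (rule sum.swap_restrict) simp
  also have "\<dots> = (\<Sum>i<n. card (e i \<inter> M))"
    by (simp add: Int_def conj_commute)
  finally show ?thesis .
qed

lemma card_heavy_inputs_le:
  assumes "finite M" and "\<And>i. i < n \<Longrightarrow> card (e i \<inter> M) \<le> d"
  shows "card {x \<in> M. K < degree e n x} * K \<le> n * d"
proof -
  define H where "H = {x \<in> M. K < degree e n x}"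
  have "finite H" unfolding H_def using assms(1) by simp
  have "card H * K \<le> (\<Sum>x\<in>H. degree e n x)"
    using sum_bounded_below[of H K "degree e n"] unfolding H_def by (simp add: mult.commute)
  also have "\<dots> \<le> (\<Sum>x\<in>M. degree e n x)"
    using assms(1) unfolding H_def by (intro sum_mono2) auto
  also have "\<dots> = (\<Sum>i<n. card (e i \<inter> M))" by (rule sum_degree_eq[OF assms(1)])
  also have "\<dots> \<le> n * d"
    using sum_bounded_above[of "{..<n}" "\<lambda>i. card (e i \<inter> M)" d] assms(2) by simp
  finally show ?thesis unfolding H_def .
qed

text \<open>Pigeonhole: a set e b with at most d elements meets at most d of the d+1 bands
  (K j, K (Suc j)].\<close>

lemma exists_avoided_band:
  fixes K :: "nat \<Rightarrow> nat" and w :: "'a \<Rightarrow> nat"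
  assumes "strict_mono K" and "\<And>b. b < n \<Longrightarrow> finite (e b) \<and> card (e b) \<le> d"
  shows "\<exists>j\<le>d. n \<le> (d + 1) * card {b. b < n \<and> (\<forall>x\<in>e b. w x \<le> K j \<or> K (Suc j) < w x)}"
proof -
  define in_band where "in_band j x \<longleftrightarrow> K j < w x \<and> w x \<le> K (Suc j)" for j x
  define G where "G j = {b. b < n \<and> (\<forall>x\<in>e b. w x \<le> K j \<or> K (Suc j) < w x)}" for j
  have band_unique: "j1 = j2" if "in_band j1 x" "in_band j2 x" for j1 j2 x
  proof (rule ccontr)
    assume "j1 \<noteq> j2"
    then have "Suc j1 \<le> j2 \<or> Suc j2 \<le> j1" by linarith
    then show False
      using that strict_mono_leD[OF assms(1)] unfolding in_band_def by (meson not_le order_trans)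
  qed
  have "\<exists>j\<le>d. b \<in> G j" if "b < n" for b
  proof -
    define L where "L = {j. j \<le> d \<and> (\<exists>x\<in>e b. in_band j x)}"
    have "card L \<le> card (e b)"
      using assms(2)[OF that] band_unique unfolding L_def
      by (intro card_le_if_inj_on_rel[where r = in_band]) auto
    then have "card L < card {..d}" using assms(2)[OF that] by simp
    then obtain j where j: "j \<le> d" "j \<notin> L"
      using card_mono[of "L" "{..d}"] unfolding L_def by fastforce
    have "w x \<le> K j \<or> K (Suc j) < w x" if "x \<in> e b" for x
      using j that unfolding L_def in_band_def by auto
    with j \<open>b < n\<close> show ?thesis unfolding G_def by blast
  qed
  then have "{..<n} \<subseteq> (\<Union>j\<le>d. G j)" by blast
  then have "n \<le> card (\<Union>j\<le>d. G j)"
    using card_mono[of "\<Union>j\<le>d. G j" "{..<n}"] unfolding G_def by simp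
  also have "\<dots> \<le> (\<Sum>j\<le>d. card (G j))" by (rule card_UN_le) simp
  also have "\<dots> \<le> (d + 1) * Max (card ` G ` {..d})"
    using sum_bounded_above[of "{..d}" "\<lambda>j. card (G j)" "Max (card ` G ` {..d})"] by simp
  finally obtain j where "j \<le> d" "n \<le> (d + 1) * card (G j)"
    using Max_in[of "card ` G ` {..d}"] by fastforce
  then show ?thesis unfolding G_def by blast
qed

lemma card_nbhd_avoiding_le:
  assumes "finite (e b)" "card (e b) \<le> d" and "\<forall>y\<in>e b - S. degree e n y \<le> k"
  shows "card (nbhd_avoiding e n S b) \<le> d * k"
proof -
  have "nbhd_avoiding e n S b \<subseteq> (\<Union>y\<in>e b - S. {c. c < n \<and> y \<in> e c})"
    unfolding nbhd_avoiding_def by blast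
  then have "card (nbhd_avoiding e n S b) \<le> card (\<Union>y\<in>e b - S. {c. c < n \<and> y \<in> e c})"
    using assms(1) by (intro card_mono) auto
  also have "\<dots> \<le> (\<Sum>y\<in>e b - S. degree e n y)"
    unfolding degree_def using assms(1) by (intro card_UN_le) simp
  also have "\<dots> \<le> card (e b - S) * k"
    using sum_bounded_above[of "e b - S" "degree e n" k] assms(3) by simp
  also have "\<dots> \<le> d * k"
    using card_mono[OF assms(1), of "e b - S"] assms(2) by (intro mult_le_mono1) auto
  finally show ?thesis .
qed

lemma card_nbhd_inputs_avoiding_le:
  assumes "\<And>c. c < n \<Longrightarrow> finite (e c) \<and> card (e c) \<le> d"
  shows "finite (nbhd_inputs_avoiding e n S b)"
    and "card (nbhd_inputs_avoiding e n S b) \<le> card (nbhd_avoiding e n S b) * d"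
proof -
  have fin: "finite (nbhd_avoiding e n S b)" unfolding nbhd_avoiding_def by simp
  have le: "finite (e c - S) \<and> card (e c - S) \<le> d" if "c \<in> nbhd_avoiding e n S b" for c
    using that assms card_mono[of "e c" "e c - S"] unfolding nbhd_avoiding_def by fastforce
  show "finite (nbhd_inputs_avoiding e n S b)"
    unfolding nbhd_inputs_avoiding_def using fin le by blast
  have "card (nbhd_inputs_avoiding e n S b) \<le> (\<Sum>c\<in>nbhd_avoiding e n S b. card (e c - S))"
    unfolding nbhd_inputs_avoiding_def by (rule card_UN_le[OF fin])
  also have "\<dots> \<le> card (nbhd_avoiding e n S b) * d"
    using sum_bounded_above[of "nbhd_avoiding e n S b" "\<lambda>c. card (e c - S)" d] le by simp
  finally show "card (nbhd_inputs_avoiding e n S b) \<le> card (nbhd_avoiding e n S b) * d" .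
qed

section \<open>Greedy disjoint subfamilies\<close>

lemma exists_maximal_disjoint_subfamily:
  fixes U :: "'b \<Rightarrow> 'a set"
  assumes "finite B"
  obtains F where "F \<subseteq> B" "disjoint_family_on U F"
    "\<And>b. b \<in> B \<Longrightarrow> U b \<noteq> {} \<Longrightarrow> \<exists>a\<in>F. U a \<inter> U b \<noteq> {}"
proof -
  from \<open>finite B\<close> have "\<exists>F \<subseteq> B. disjoint_family_on U F \<and>
    (\<forall>b\<in>B. U b \<noteq> {} \<longrightarrow> (\<exists>a\<in>F. U a \<inter> U b \<noteq> {}))"
  proof (induction B rule: finite_induct)
    case empty
    show ?case by (auto simp: disjoint_family_on_def)
  next
    case (insert x B)
    then obtain F where F: "F \<subseteq> B" "disjoint_family_on U F"
      "\<forall>b\<in>B. U b \<noteq> {} \<longrightarrow> (\<exists>a\<in>F. U a \<inter> U b \<noteq> {})"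
      by blast
    show ?case
    proof (cases "\<exists>a\<in>F. U a \<inter> U x \<noteq> {}")
      case True
      with F show ?thesis by (intro exI[of _ F]) (auto simp: Int_commute)
    next
      case False
      with F have "disjoint_family_on U (insert x F)"
        unfolding disjoint_family_on_def by blast
      with F show ?thesis by (intro exI[of _ "insert x F"]) auto
    qed
  qed
  with that show ?thesis by blast
qed

lemma card_shrinks_after_fixing:
  fixes U :: "'a set \<Rightarrow> 'b \<Rightarrow> 'a set"
  assumes shrink: "\<And>S S' b. S \<subseteq> S' \<Longrightarrow> U S' b \<subseteq> U S b - S'"
    and "finite (U S b)" and meets: "U S b \<noteq> {} \<Longrightarrow> U S b \<inter> C \<noteq> {}"
  shows "finite (U (S \<union> C) b)" and "card (U (S \<union> C) b) \<le> card (U S b) - 1"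
proof -
  have sub: "U (S \<union> C) b \<subseteq> U S b - C" using shrink[of S "S \<union> C" b] by blast
  then show "finite (U (S \<union> C) b)" using \<open>finite (U S b)\<close> by (meson finite_Diff finite_subset)
  show "card (U (S \<union> C) b) \<le> card (U S b) - 1"
  proof (cases "U S b = {}")
    case False
    then have "card (U S b - C) < card (U S b)"
      using meets \<open>finite (U S b)\<close> by (intro psubset_card_mono) auto
    moreover have "card (U (S \<union> C) b) \<le> card (U S b - C)"
      using sub \<open>finite (U S b)\<close> by (simp add: card_mono)
    ultimately show ?thesis by linarith
  qed (use sub in simp)
qed

text \<open>Greedy phase: while a maximal disjoint subfamily is too small, fix all inputs it
  covers.  Every nonempty set meets these inputs and shrinks, so after p rounds (p bounding
  the sizes) all sets are empty; round l succeeds once R l sets are disjoint.\<close>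

lemma greedy_disjoint_subfamily:
  fixes U :: "'a set \<Rightarrow> 'b \<Rightarrow> 'a set" and R :: "nat \<Rightarrow> nat"
  assumes "finite B"
    and shrink: "\<And>S S' b. S \<subseteq> S' \<Longrightarrow> U S' b \<subseteq> U S b - S'"
    and small: "\<forall>b\<in>B. finite (U S b) \<and> card (U S b) \<le> p \<and> card (U S b) \<le> s"
    and "R p \<le> card B"
  shows "\<exists>S' A i. S \<subseteq> S' \<and> S' - S \<subseteq> (\<Union>b\<in>B. U S b) \<and> i \<le> p \<and> A \<subseteq> B \<and>
    card A = R i \<and> disjoint_family_on (U S') A \<and> card (S' - S) \<le> s * (\<Sum>l<i. R l)"
  using small \<open>R p \<le> card B\<close>
proof (induction p arbitrary: S R)
  case 0
  then have "\<forall>b\<in>B. U S b = {}" by (simp add: card_eq_0_iff) blast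
  moreover obtain A where "A \<subseteq> B" "card A = R 0"
    using obtain_subset_with_card_n[OF \<open>R 0 \<le> card B\<close>] by blast
  ultimately show ?case
    by (intro exI[of _ S] exI[of _ A] exI[of _ 0]) (auto simp: disjoint_family_on_def)
next
  case (Suc q)
  obtain F where F: "F \<subseteq> B" "disjoint_family_on (U S) F"
    and maximal: "\<And>b. b \<in> B \<Longrightarrow> U S b \<noteq> {} \<Longrightarrow> \<exists>a\<in>F. U S a \<inter> U S b \<noteq> {}"
    using exists_maximal_disjoint_subfamily[OF \<open>finite B\<close>] by blast
  show ?case
  proof (cases "R 0 \<le> card F")
    case True
    then obtain A where "A \<subseteq> F" "card A = R 0"
      by (rule obtain_subset_with_card_n)
    moreover from this(1) F(2) have "disjoint_family_on (U S) A"
      by (rule disjoint_family_on_mono)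
    ultimately show ?thesis
      using F(1) by (intro exI[of _ S] exI[of _ A] exI[of _ 0]) auto
  next
    case False
    define C where "C = (\<Union>a\<in>F. U S a)"
    have "finite F" using F(1) \<open>finite B\<close> finite_subset by blast
    have "card C \<le> (\<Sum>a\<in>F. card (U S a))"
      unfolding C_def by (rule card_UN_le[OF \<open>finite F\<close>])
    also have "\<dots> \<le> card F * s"
      using sum_bounded_above[of F "\<lambda>a. card (U S a)" s] F(1) Suc.prems(1) by auto
    also have "\<dots> \<le> s * R 0" using False by simp
    finally have card_C: "card C \<le> s * R 0" .
    have "\<forall>b\<in>B. finite (U (S \<union> C) b) \<and> card (U (S \<union> C) b) \<le> q \<and> card (U (S \<union> C) b) \<le> s"
    proof
      fix b assume "b \<in> B"
      then have "U S b \<noteq> {} \<Longrightarrow> U S b \<inter> C \<noteq> {}"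
        using maximal unfolding C_def by blast
      with Suc.prems(1) \<open>b \<in> B\<close> show "finite (U (S \<union> C) b) \<and> card (U (S \<union> C) b) \<le> q \<and> card (U (S \<union> C) b) \<le> s"
        using card_shrinks_after_fixing[where S = S and b = b and C = C, OF shrink] by fastforce
    qed
    note IH_ex = Suc.IH[of "S \<union> C" "\<lambda>i. R (Suc i)", OF this Suc.prems(2)]
    obtain S' A i where IH: "S \<union> C \<subseteq> S'" "S' - (S \<union> C) \<subseteq> (\<Union>b\<in>B. U (S \<union> C) b)"
      "i \<le> q" "A \<subseteq> B" "card A = R (Suc i)" "disjoint_family_on (U S') A"
      "card (S' - (S \<union> C)) \<le> s * (\<Sum>l<i. R (Suc l))"
      using IH_ex by (elim exE conjE) (rule that; assumption)
    have "(\<Union>b\<in>B. U (S \<union> C) b) \<subseteq> (\<Union>b\<in>B. U S b)"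
      using shrink[of S "S \<union> C"] by (intro UN_mono) auto
    moreover have C_sub: "C \<subseteq> (\<Union>b\<in>B. U S b)"
      unfolding C_def using F(1) by (rule UN_mono) simp
    ultimately have "(S' - (S \<union> C)) \<union> C \<subseteq> (\<Union>b\<in>B. U S b)"
      using IH(2) by (meson Un_least order_trans)
    moreover have "S' - S \<subseteq> (S' - (S \<union> C)) \<union> C" by blast
    ultimately have fixed: "S' - S \<subseteq> (\<Union>b\<in>B. U S b)" by (rule order_trans[rotated])
    have "finite (\<Union>b\<in>B. U S b)" using \<open>finite B\<close> Suc.prems(1) by blast
    then have "card (S' - S) \<le> card ((S' - (S \<union> C)) \<union> C)"
      using fixed C_sub by (intro card_mono) (auto intro: finite_subset)
    also have "\<dots> \<le> card (S' - (S \<union> C)) + card C" by (rule card_Un_le)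
    also have "\<dots> \<le> s * (\<Sum>l<Suc i. R l)"
      using IH(7) card_C unfolding sum.lessThan_Suc_shift distrib_left by linarith
    finally have "card (S' - S) \<le> s * (\<Sum>l<Suc i. R l)" .
    with fixed show ?thesis
      using IH by (intro exI[of _ S'] exI[of _ A] exI[of _ "Suc i"]) auto
  qed
qed

lemma geometric_budget:
  fixes R :: "nat \<Rightarrow> nat"
  assumes "2 * c * X \<le> R 0" and "\<And>l. R (Suc l) = (1 + 2 * s * X) * R l"
  shows "2 * X * (c + s * (\<Sum>l<i. R l)) \<le> R i"
proof (induction i)
  case 0
  then show ?case using assms(1) by (simp add: mult.commute mult.left_commute)
next
  case (Suc i)
  have "2 * X * (c + s * (\<Sum>l<Suc i. R l)) = 2 * X * (c + s * (\<Sum>l<i. R l)) + 2 * s * X * R i"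
    by (simp add: algebra_simps)
  also have "\<dots> \<le> R i + 2 * s * X * R i" using Suc.IH by simp
  also have "\<dots> = R (Suc i)" unfolding assms(2)[of i] by (simp add: algebra_simps)
  finally show ?case .
qed

text \<open>The greedy phase with R l = D (1 + 2 s X)^l, D = |B| div (1 + 2 s X)^s: the inputs fixed
  in the first i rounds cost at most s (R 0 + ... + R (i-1)), which the growth of R keeps
  below R i / X.\<close>

lemma greedy_restriction:
  fixes U :: "'a set \<Rightarrow> 'b \<Rightarrow> 'a set"
  assumes "finite B"
    and shrink: "\<And>S S' b. S \<subseteq> S' \<Longrightarrow> U S' b \<subseteq> U S b - S'"
    and small: "\<forall>b\<in>B. finite (U S b) \<and> card (U S b) \<le> s"
    and large: "(1 + 2 * s * X) ^ s \<le> card B" "4 * card S * X * (1 + 2 * s * X) ^ s \<le> card B"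
  shows "\<exists>S' A. S \<subseteq> S' \<and> S' - S \<subseteq> (\<Union>b\<in>B. U S b) \<and> A \<subseteq> B \<and>
    disjoint_family_on (U S') A \<and> card S' * X \<le> card A \<and> card B \<le> 2 * (1 + 2 * s * X) ^ s * card A"
proof -
  define P where "P = (1 + 2 * s * X) ^ s"
  define D where "D = card B div P"
  define R where "R l = D * (1 + 2 * s * X) ^ l" for l
  have "1 \<le> P" unfolding P_def by simp
  have "P \<le> card B" using large(1) unfolding P_def .
  then have "1 \<le> D" unfolding D_def using div_le_mono[of P "card B" P] \<open>1 \<le> P\<close> by simp
  have "card B = D * P + card B mod P" unfolding D_def by simp
  moreover have "card B mod P < P" using \<open>1 \<le> P\<close> by simp
  moreover have "P \<le> D * P" using \<open>1 \<le> D\<close> by simp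
  ultimately have B_le: "card B \<le> 2 * (D * P)" by linarith
  have "(2 * card S * X) * (2 * P) = 4 * card S * X * P" by simp
  also have "\<dots> \<le> card B" using large(2) unfolding P_def .
  also have "\<dots> \<le> D * (2 * P)" using B_le by (simp add: mult.left_commute)
  finally have base: "2 * card S * X \<le> R 0"
    unfolding R_def using \<open>1 \<le> P\<close> by (simp add: mult.commute mult.left_commute)
  have small': "\<forall>b\<in>B. finite (U S b) \<and> card (U S b) \<le> s \<and> card (U S b) \<le> s"
    using small by simp
  have "R s \<le> card B" unfolding R_def D_def P_def[symmetric] by simp
  note greedy = greedy_disjoint_subfamily[where U = U and R = R and p = s, OF \<open>finite B\<close> shrink small' this]
  obtain S' A i where S': "S \<subseteq> S'" "S' - S \<subseteq> (\<Union>b\<in>B. U S b)"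
    and A: "A \<subseteq> B" "card A = R i" "disjoint_family_on (U S') A"
    and cost: "card (S' - S) \<le> s * (\<Sum>l<i. R l)"
    using greedy by blast
  have "card S' \<le> card S + card (S' - S)"
    using card_Un_le[of S "S' - S"] S'(1) by (simp add: Un_absorb1)
  then have "2 * X * card S' \<le> 2 * X * (card S + s * (\<Sum>l<i. R l))"
    using cost by simp
  also have "\<dots> \<le> card A"
    unfolding A(2) by (rule geometric_budget[where R = R, OF base]) (simp add: R_def algebra_simps)
  finally have "2 * X * card S' \<le> card A" .
  moreover have "card S' * X \<le> 2 * X * card S'" by simp
  ultimately have "card S' * X \<le> card A" by (rule order_trans[rotated])
  moreover have "card B \<le> 2 * P * card A"
  proof -
    have "D \<le> card A" unfolding A(2) R_def by simp
    then have "2 * (D * P) \<le> 2 * P * card A"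
      using mult_le_mono2[of D "card A" "2 * P"] by (simp add: mult.commute mult.left_commute)
    with B_le show ?thesis by (rule order_trans)
  qed
  ultimately show ?thesis
    using S' A unfolding P_def by blast
qed

section \<open>Tower thresholds\<close>

lemma two_pow_le_tow2: "2 ^ h \<le> tow2 h"
proof (induction h)
  case (Suc h)
  have "Suc h \<le> 2 ^ h" by (rule Suc_leI[OF less_exp])
  also have "\<dots> \<le> tow2 h" by (rule Suc.IH)
  finally have "(2::nat) ^ Suc h \<le> 2 ^ tow2 h" by (rule power_increasing) simp
  then show ?case by simp
qed simp

lemma tow2_pos: "0 < tow2 h"
  using two_pow_le_tow2[of h] by (metis le_zero_eq not_gr0 power_not_zero zero_neq_numeral)

lemma tow2_mono: "h \<le> h' \<Longrightarrow> tow2 h \<le> tow2 h'"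
proof (induction h' rule: dec_induct)
  case (step k)
  then show ?case using less_exp[of "tow2 k"] by (metis le_trans less_imp_le tow2.simps(2))
qed simp

lemma square_le_two_pow: "4 \<le> (x::nat) \<Longrightarrow> x * x \<le> 2 ^ x"
proof (induction x rule: dec_induct)
  case (step x)
  have "Suc x * Suc x = x * x + 2 * x + 1" by simp
  also have "\<dots> \<le> x * x + x * x"
    using mult_le_mono1[OF step(1), of x] step(1) by linarith
  also have "\<dots> \<le> 2 ^ x + 2 ^ x" using step(3) by simp
  finally show ?case by simp
qed simp

lemma cube_le_two_pow: "64 * (Y * Y * Y) \<le> (2::nat) ^ (9 * Y)"
proof (cases "Y = 0")
  case False
  have "Y * Y * Y \<le> 2 ^ Y * 2 ^ Y * 2 ^ Y"
    using less_exp[of Y] by (intro mult_le_mono) auto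
  also have "\<dots> = 2 ^ (3 * Y)" by (simp flip: power_add)
  finally have "64 * (Y * Y * Y) \<le> 2 ^ 6 * 2 ^ (3 * Y)" by simp
  also have "\<dots> = 2 ^ (6 + 3 * Y)" by (simp add: power_add)
  also have "\<dots> \<le> 2 ^ (9 * Y)" using False by (intro power_increasing) auto
  finally show ?thesis .
qed simp

text \<open>With t = d K and s = d t, the factor 2^(28t) pays for the final cost estimate and
  (1 + 2 s 2^(28t))^s for the s rounds of the greedy phase; 4 d (d+1) absorbs the loss
  from pigeonholing the outputs into d+1 bands.\<close>

definition thr_step :: "nat \<Rightarrow> nat \<Rightarrow> nat" where
  "thr_step d K = 4 * d * (d + 1) * (1 + 2 * (d * (d * K)) * 2 ^ (28 * (d * K))) ^ (d * (d * K))
     * 2 ^ (28 * (d * K))"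

fun threshold :: "nat \<Rightarrow> nat \<Rightarrow> nat" where
  "threshold d 0 = 0"
| "threshold d (Suc i) = thr_step d (threshold d i)"

lemma thr_step_ge:
  assumes "1 \<le> d"
  shows "2 * (d + 1) * (1 + 2 * (d * (d * K)) * 2 ^ (28 * (d * K))) ^ (d * (d * K)) \<le> thr_step d K"
    and "d * K < thr_step d K"
proof -
  define Q where "Q = (1 + 2 * (d * (d * K)) * 2 ^ (28 * (d * K))) ^ (d * (d * K))"
  have "1 \<le> Q" unfolding Q_def by simp
  have eq: "thr_step d K = (4 * d * (d + 1) * Q) * 2 ^ (28 * (d * K))"
    unfolding thr_step_def Q_def by simp
  have "2 * (d + 1) \<le> 4 * d * (d + 1)" using mult_le_mono1[OF assms, of "4 * (d + 1)"] by simp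
  then have "2 * (d + 1) * Q \<le> 4 * d * (d + 1) * Q" by (rule mult_le_mono1)
  also have "\<dots> \<le> 4 * d * (d + 1) * Q * 2 ^ (28 * (d * K))" by simp
  finally show "2 * (d + 1) * Q \<le> thr_step d K" using eq by simp
  have "d * K < 2 ^ (d * K)" by (rule less_exp)
  also have "\<dots> \<le> 2 ^ (28 * (d * K))" by (intro power_increasing) auto
  also have "\<dots> \<le> (4 * d * (d + 1) * Q) * 2 ^ (28 * (d * K))"
    using assms \<open>1 \<le> Q\<close> by simp
  finally show "d * K < thr_step d K" using eq by simp
qed

lemma strict_mono_threshold:
  assumes "1 \<le> d"
  shows "strict_mono (threshold d)"
  unfolding strict_mono_Suc_iff
proof
  fix i
  have "threshold d i \<le> d * threshold d i" using assms by simp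
  also have "\<dots> < thr_step d (threshold d i)" by (rule thr_step_ge(2)[OF assms])
  finally show "threshold d i < threshold d (Suc i)" by simp
qed

lemma thr_step_le_two_pow:
  assumes "1 \<le> d"
  shows "thr_step d K \<le> 2 ^ (2 ^ (9 * (d * (K + 1))))"
proof -
  define Y where "Y = d * (K + 1)"
  define t where "t = d * K"
  define s where "s = d * t"
  have "1 \<le> Y" "t \<le> Y" "d \<le> Y" unfolding Y_def t_def using assms by simp_all
  have "s \<le> Y * Y" unfolding s_def t_def Y_def using mult_le_mono by fastforce
  have "Y * Y \<le> 2 ^ (2 * Y)"
    using less_exp[of Y] mult_le_mono[of Y "2 ^ Y" Y "2 ^ Y"] by (simp add: mult_2 power_add)
  then have "2 * s * 2 ^ (28 * t) \<le> 2 * 2 ^ (2 * Y) * 2 ^ (28 * Y)"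
    using \<open>s \<le> Y * Y\<close> \<open>t \<le> Y\<close> by (intro mult_le_mono) (auto intro: power_increasing)
  also have "\<dots> = 2 ^ (1 + 30 * Y)" by (simp add: power_add[symmetric])
  finally have "1 + 2 * s * 2 ^ (28 * t) \<le> 2 ^ (1 + 30 * Y) + 2 ^ (1 + 30 * Y)"
    using one_le_power[of "2::nat" "1 + 30 * Y"] by linarith
  also have "\<dots> = 2 ^ (2 + 30 * Y)" by simp
  also have "\<dots> \<le> 2 ^ (32 * Y)" using \<open>1 \<le> Y\<close> by (intro power_increasing) auto
  finally have "(1 + 2 * s * 2 ^ (28 * t)) ^ s \<le> 2 ^ (32 * Y * s)"
    by (metis power_mono power_mult zero_le)
  also have "\<dots> \<le> 2 ^ (32 * (Y * Y * Y))"
    using \<open>s \<le> Y * Y\<close> by (intro power_increasing) auto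
  finally have power_le: "(1 + 2 * s * 2 ^ (28 * t)) ^ s \<le> 2 ^ (32 * (Y * Y * Y))" .
  have "d + 1 \<le> 2 ^ d" using Suc_leI[OF less_exp[of d]] by simp
  also have "\<dots> \<le> 2 ^ Y" using \<open>d \<le> Y\<close> by (intro power_increasing) auto
  finally have "4 * d * (d + 1) \<le> 4 * 2 ^ Y * 2 ^ Y" by (intro mult_le_mono) auto
  then have factor_le: "4 * d * (d + 1) \<le> 2 ^ (2 + 2 * Y)" by (simp add: power_add mult_2)
  have "thr_step d K = 4 * d * (d + 1) * (1 + 2 * s * 2 ^ (28 * t)) ^ s * 2 ^ (28 * t)"
    unfolding thr_step_def s_def t_def by (simp add: mult.assoc)
  also have "\<dots> \<le> 2 ^ (2 + 2 * Y) * 2 ^ (32 * (Y * Y * Y)) * 2 ^ (28 * Y)"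
    using factor_le power_le \<open>t \<le> Y\<close> by (intro mult_le_mono) (auto intro: power_increasing)
  also have "\<dots> = 2 ^ (2 + 2 * Y + 32 * (Y * Y * Y) + 28 * Y)" by (simp only: power_add)
  also have "\<dots> \<le> 2 ^ (64 * (Y * Y * Y))"
  proof (intro power_increasing)
    have "Y * 1 * 1 \<le> Y * Y * Y" using \<open>1 \<le> Y\<close> by (intro mult_le_mono) auto
    moreover have "1 \<le> Y * Y * Y" using \<open>1 \<le> Y\<close> by simp
    ultimately show "2 + 2 * Y + 32 * (Y * Y * Y) + 28 * Y \<le> 64 * (Y * Y * Y)"
      by linarith
  qed simp
  also have "\<dots> \<le> 2 ^ (2 ^ (9 * Y))"
    using cube_le_two_pow by (intro power_increasing) auto
  finally show ?thesis unfolding Y_def .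
qed

lemma thr_step_le_tow2:
  assumes "1 \<le> d" and "d + 5 \<le> h" and "K \<le> tow2 h"
  shows "thr_step d K \<le> tow2 (h + 3)"
proof -
  define x where "x = tow2 h"
  have "2 ^ (d + 5) \<le> x"
    unfolding x_def using assms(2) two_pow_le_tow2[of h]
    by (meson le_trans one_le_numeral power_increasing)
  moreover have "18 * d \<le> 2 ^ (d + 5)"
  proof -
    have "d \<le> 2 ^ d" using less_exp[of d] by simp
    then have "9 * d \<le> 16 * 2 ^ d" by linarith
    then show ?thesis by (simp add: power_add)
  qed
  moreover have "(4::nat) \<le> 2 ^ (d + 5)" by (simp add: power_add)
  ultimately have "18 * d \<le> x" "4 \<le> x" by linarith+
  have "9 * (d * (K + 1)) \<le> 9 * (d * (x + x))"
    using assms(3) \<open>4 \<le> x\<close> unfolding x_def by (intro mult_le_mono) auto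
  also have "\<dots> = 18 * d * x" by simp
  also have "\<dots> \<le> x * x" using \<open>18 * d \<le> x\<close> by (simp add: mult_le_mono)
  also have "\<dots> \<le> 2 ^ x" using \<open>4 \<le> x\<close> by (rule square_le_two_pow)
  finally have "9 * (d * (K + 1)) \<le> tow2 (Suc h)" unfolding x_def by simp
  then have "2 ^ (2 ^ (9 * (d * (K + 1)))) \<le> tow2 (h + 3)"
    by (simp add: numeral_3_eq_3 power_increasing)
  with thr_step_le_two_pow[OF assms(1)] show ?thesis by (rule order_trans)
qed

lemma threshold_le_tow2:
  assumes "1 \<le> d" and "i \<le> d + 1"
  shows "threshold d i \<le> tow2 (16 * d)"
proof -
  have "threshold d i \<le> tow2 (d + 5 + 3 * i)" for i
  proof (induction i)
    case (Suc i)
    show ?case using thr_step_le_tow2[OF assms(1) _ Suc.IH] by simp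
  qed simp
  also have "tow2 (d + 5 + 3 * i) \<le> tow2 (16 * d)" using assms by (intro tow2_mono) simp
  finally show ?thesis .
qed

section \<open>Isolated outputs\<close>

lemma isolated_outputs_le_one: "isolated_outputs e n S n {..<min n 1}"
proof -
  have "card (nbhd_avoiding e n S a) \<le> n" for a
    using card_mono[of "{..<n}" "nbhd_avoiding e n S a"] unfolding nbhd_avoiding_def by auto
  moreover have "disjoint_family_on U {..<min n 1}" for U :: "nat \<Rightarrow> 'a set"
    unfolding disjoint_family_on_def by auto
  ultimately show ?thesis unfolding isolated_outputs_def by auto
qed

lemma isolated_outputs_no_deps:
  assumes "\<And>i. i < n \<Longrightarrow> e i = {}"
  shows "isolated_outputs e n S 0 {..<n}"
proof -
  have "nbhd_avoiding e n S a = {}" if "a < n" for a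
    using assms that unfolding nbhd_avoiding_def by auto
  then show ?thesis
    unfolding isolated_outputs_def disjoint_family_on_def nbhd_inputs_avoiding_def by auto
qed

lemma nbhd_bounds_without_heavy:
  assumes "finite M" and deps: "\<And>i. i < n \<Longrightarrow> e i \<subseteq> M \<and> card (e i) \<le> d"
    and "b < n" and avoid: "\<forall>x\<in>e b. degree e n x \<le> k \<or> k' < degree e n x"
  defines "S \<equiv> {x \<in> M. k' < degree e n x}"
  shows "card (nbhd_avoiding e n S b) \<le> d * k"
    and "finite (nbhd_inputs_avoiding e n S b)"
    and "card (nbhd_inputs_avoiding e n S b) \<le> d * (d * k)"
proof -
  have fin: "\<And>c. c < n \<Longrightarrow> finite (e c) \<and> card (e c) \<le> d"
    using deps \<open>finite M\<close> finite_subset by blast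
  have "\<forall>y\<in>e b - S. degree e n y \<le> k"
    using avoid deps[OF \<open>b < n\<close>] unfolding S_def by auto
  then show nbhd_le: "card (nbhd_avoiding e n S b) \<le> d * k"
    using fin[OF \<open>b < n\<close>] by (intro card_nbhd_avoiding_le) auto
  show "finite (nbhd_inputs_avoiding e n S b)"
    by (rule card_nbhd_inputs_avoiding_le(1)[OF fin])
  have "card (nbhd_inputs_avoiding e n S b) \<le> card (nbhd_avoiding e n S b) * d"
    by (rule card_nbhd_inputs_avoiding_le(2)[OF fin])
  also have "\<dots> \<le> d * (d * k)" using nbhd_le by (simp add: mult.commute)
  finally show "card (nbhd_inputs_avoiding e n S b) \<le> d * (d * k)" .
qed

text \<open>Fix the inputs of degree above K (Suc j), for a band j avoided by many outputs: those
  outputs then only see inputs of degree at most K j.\<close>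

lemma exists_band_restriction:
  fixes e :: "nat \<Rightarrow> 'a set" and K :: "nat \<Rightarrow> nat"
  assumes "finite M" and deps: "\<And>i. i < n \<Longrightarrow> e i \<subseteq> M \<and> card (e i) \<le> d"
    and "strict_mono K"
  shows "\<exists>j\<le>d. \<exists>B S. B \<subseteq> {..<n} \<and> S \<subseteq> M \<and> n \<le> (d + 1) * card B \<and>
    card S * K (Suc j) \<le> n * d \<and>
    (\<forall>b\<in>B. card (nbhd_avoiding e n S b) \<le> d * K j \<and> finite (nbhd_inputs_avoiding e n S b) \<and>
       card (nbhd_inputs_avoiding e n S b) \<le> d * (d * K j))"
proof -
  have "\<And>b. b < n \<Longrightarrow> finite (e b) \<and> card (e b) \<le> d"
    using deps \<open>finite M\<close> finite_subset by blast
  then obtain j where "j \<le> d"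
    and n_le: "n \<le> (d + 1) * card {b. b < n \<and> (\<forall>x\<in>e b. degree e n x \<le> K j \<or> K (Suc j) < degree e n x)}"
    using exists_avoided_band[OF \<open>strict_mono K\<close>] by blast
  define B where "B = {b. b < n \<and> (\<forall>x\<in>e b. degree e n x \<le> K j \<or> K (Suc j) < degree e n x)}"
  define S where "S = {x \<in> M. K (Suc j) < degree e n x}"
  have "card (e i \<inter> M) \<le> d" if "i < n" for i
    using deps[OF that] by (simp add: Int_absorb2)
  then have heavy: "card S * K (Suc j) \<le> n * d"
    unfolding S_def using card_heavy_inputs_le[OF \<open>finite M\<close>] by blast
  have bounds: "\<forall>b\<in>B. card (nbhd_avoiding e n S b) \<le> d * K j \<and> finite (nbhd_inputs_avoiding e n S b) \<and>
       card (nbhd_inputs_avoiding e n S b) \<le> d * (d * K j)"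
    unfolding B_def S_def
    using nbhd_bounds_without_heavy[where e = e and n = n and k = "K j" and k' = "K (Suc j)",
        OF \<open>finite M\<close> deps]
    by blast
  have "B \<subseteq> {..<n}" "S \<subseteq> M" unfolding B_def S_def by auto
  with \<open>j \<le> d\<close> n_le[folded B_def] heavy bounds show ?thesis
    by (intro exI[of _ j] exI[of _ B] exI[of _ S] conjI) simp_all
qed

lemma nbhd_inputs_avoiding_subset:
  "(\<And>i. i < n \<Longrightarrow> e i \<subseteq> M) \<Longrightarrow> nbhd_inputs_avoiding e n S b \<subseteq> M"
  unfolding nbhd_inputs_avoiding_def nbhd_avoiding_def by blast

lemma exists_isolated_subset:
  fixes e :: "nat \<Rightarrow> 'a set"
  assumes deps: "\<And>i. i < n \<Longrightarrow> e i \<subseteq> M" and "B \<subseteq> {..<n}" and "S \<subseteq> M"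
    and bounds: "\<forall>b\<in>B. card (nbhd_avoiding e n S b) \<le> t \<and>
      finite (nbhd_inputs_avoiding e n S b) \<and> card (nbhd_inputs_avoiding e n S b) \<le> s"
    and large: "(1 + 2 * s * X) ^ s \<le> card B" "4 * card S * X * (1 + 2 * s * X) ^ s \<le> card B"
  shows "\<exists>S' A. S' \<subseteq> M \<and> isolated_outputs e n S' t A \<and> card S' * X \<le> card A \<and>
    card B \<le> 2 * (1 + 2 * s * X) ^ s * card A"
proof -
  have "finite B" using \<open>B \<subseteq> {..<n}\<close> finite_subset by blast
  have small: "\<forall>b\<in>B. finite (nbhd_inputs_avoiding e n S b) \<and> card (nbhd_inputs_avoiding e n S b) \<le> s"
    using bounds by blast
  have shrink: "\<And>S S' b. S \<subseteq> S' \<Longrightarrow>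
      nbhd_inputs_avoiding e n S' b \<subseteq> nbhd_inputs_avoiding e n S b - S'"
    by (rule nbhd_inputs_avoiding_antimono)
  have "\<exists>S' A. S \<subseteq> S' \<and> S' - S \<subseteq> (\<Union>b\<in>B. nbhd_inputs_avoiding e n S b) \<and> A \<subseteq> B \<and>
      disjoint_family_on (nbhd_inputs_avoiding e n S') A \<and> card S' * X \<le> card A \<and>
      card B \<le> 2 * (1 + 2 * s * X) ^ s * card A"
    using \<open>finite B\<close> shrink small large by (rule greedy_restriction)
  then obtain S' A where "S \<subseteq> S'" and fixed: "S' - S \<subseteq> (\<Union>b\<in>B. nbhd_inputs_avoiding e n S b)"
    and "A \<subseteq> B" and disj: "disjoint_family_on (nbhd_inputs_avoiding e n S') A"
    and "card S' * X \<le> card A" "card B \<le> 2 * (1 + 2 * s * X) ^ s * card A"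
    by blast
  have "S' \<subseteq> M"
    using \<open>S \<subseteq> M\<close> fixed nbhd_inputs_avoiding_subset[of n e M S] deps by blast
  have "card (nbhd_avoiding e n S' a) \<le> t" if "a \<in> A" for a
  proof -
    have "card (nbhd_avoiding e n S' a) \<le> card (nbhd_avoiding e n S a)"
      using nbhd_avoiding_antimono[OF \<open>S \<subseteq> S'\<close>] by (intro card_mono) (auto simp: nbhd_avoiding_def)
    then show ?thesis using bounds that \<open>A \<subseteq> B\<close> by fastforce
  qed
  with \<open>A \<subseteq> B\<close> \<open>B \<subseteq> {..<n}\<close> disj have "isolated_outputs e n S' t A"
    unfolding isolated_outputs_def by blast
  with \<open>S' \<subseteq> M\<close> \<open>card S' * X \<le> card A\<close> \<open>card B \<le> 2 * (1 + 2 * s * X) ^ s * card A\<close>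
  show ?thesis by blast
qed

lemma exists_isolated_outputs_large:
  fixes e :: "nat \<Rightarrow> 'a set"
  assumes "finite M" and deps: "\<And>i. i < n \<Longrightarrow> e i \<subseteq> M \<and> card (e i) \<le> d"
    and "1 \<le> d" and "tow2 (16 * d) < n"
  shows "\<exists>S A t. S \<subseteq> M \<and> isolated_outputs e n S t A \<and> card S * 2 ^ (28 * t) \<le> card A \<and>
    n \<le> card A * tow2 (16 * d) \<and> t \<le> tow2 (16 * d)"
proof -
  define K where "K = threshold d"
  have "strict_mono K" unfolding K_def by (rule strict_mono_threshold[OF \<open>1 \<le> d\<close>])
  note band = exists_band_restriction[where e = e and n = n and d = d, OF \<open>finite M\<close> deps this]
  obtain j B S where "j \<le> d" "B \<subseteq> {..<n}" "S \<subseteq> M" and n_le: "n \<le> (d + 1) * card B"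
    and heavy: "card S * K (Suc j) \<le> n * d"
    and bounds: "\<forall>b\<in>B. card (nbhd_avoiding e n S b) \<le> d * K j \<and>
      finite (nbhd_inputs_avoiding e n S b) \<and> card (nbhd_inputs_avoiding e n S b) \<le> d * (d * K j)"
    using band by blast
  define t where "t = d * K j"
  define s where "s = d * t"
  define X where "X = (2::nat) ^ (28 * t)"
  define P where "P = (1 + 2 * s * X) ^ s"
  have K_Suc: "K (Suc j) = 4 * d * (d + 1) * P * X"
    unfolding K_def P_def X_def s_def t_def by (simp add: thr_step_def)
  have P_le: "2 * (d + 1) * P \<le> K (Suc j)" and "t < K (Suc j)"
    unfolding K_def P_def X_def s_def t_def using thr_step_ge[OF \<open>1 \<le> d\<close>] by simp_all
  have K_le: "K (Suc j) \<le> tow2 (16 * d)"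
    unfolding K_def by (rule threshold_le_tow2[OF \<open>1 \<le> d\<close>]) (use \<open>j \<le> d\<close> in simp)
  have "(d + 1) * P < (d + 1) * card B" using P_le K_le assms(4) n_le by linarith
  then have "P \<le> card B" by (simp only: mult_less_cancel1) simp
  have "(d * (d + 1)) * (4 * card S * X * P) = card S * K (Suc j) * 1"
    unfolding K_Suc by (simp add: algebra_simps)
  also have "\<dots> \<le> n * d" using heavy by simp
  also have "\<dots> \<le> (d + 1) * card B * d" using n_le by (rule mult_le_mono1)
  also have "\<dots> = (d * (d + 1)) * card B" by (simp add: algebra_simps)
  finally have "4 * card S * X * P \<le> card B"
    using \<open>1 \<le> d\<close> by (simp only: mult_le_cancel1) simp
  moreover have "\<And>i. i < n \<Longrightarrow> e i \<subseteq> M" using deps by blast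
  ultimately have "\<exists>S' A. S' \<subseteq> M \<and> isolated_outputs e n S' t A \<and> card S' * X \<le> card A \<and>
      card B \<le> 2 * P * card A"
    using \<open>B \<subseteq> {..<n}\<close> \<open>S \<subseteq> M\<close> bounds[folded t_def, folded s_def] \<open>P \<le> card B\<close>
    unfolding P_def by (intro exists_isolated_subset)
  then obtain S' A where "S' \<subseteq> M" "isolated_outputs e n S' t A"
    and "card S' * X \<le> card A" and B_le: "card B \<le> 2 * P * card A"
    by blast
  have "n \<le> (d + 1) * (2 * P * card A)"
    using n_le mult_le_mono2[OF B_le, of "d + 1"] by (rule order_trans)
  also have "\<dots> = (2 * (d + 1) * P) * card A" by (simp add: algebra_simps)
  also have "\<dots> \<le> tow2 (16 * d) * card A" using P_le K_le by simp
  finally have "n \<le> card A * tow2 (16 * d)" by (simp add: mult.commute)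
  moreover have "t \<le> tow2 (16 * d)" using \<open>t < K (Suc j)\<close> K_le by simp
  ultimately show ?thesis
    using \<open>S' \<subseteq> M\<close> \<open>isolated_outputs e n S' t A\<close> \<open>card S' * X \<le> card A\<close>
    unfolding X_def by blast
qed

lemma exists_isolated_outputs:
  fixes e :: "nat \<Rightarrow> 'a set"
  assumes "finite M" and deps: "\<And>i. i < n \<Longrightarrow> e i \<subseteq> M \<and> card (e i) \<le> d"
  shows "\<exists>S A t. S \<subseteq> M \<and> isolated_outputs e n S t A \<and> card S * 2 ^ (28 * t) \<le> card A \<and>
    n \<le> card A * tow2 (16 * d) \<and> t \<le> tow2 (16 * d)"
proof (cases "n \<le> tow2 (16 * d)")
  case True
  have "n \<le> card {..<min n 1} * tow2 (16 * d)" using True tow2_pos by (cases n) auto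
  with True show ?thesis
    using isolated_outputs_le_one by (intro exI[of _ "{}"] exI[of _ "{..<min n 1}"] exI[of _ n]) auto
next
  case large: False
  show ?thesis
  proof (cases "d = 0")
    case True
    then have "e i = {}" if "i < n" for i
      using deps[OF that] \<open>finite M\<close> finite_subset card_0_eq by (metis le_zero_eq)
    then show ?thesis
      using isolated_outputs_no_deps[of n e "{}"] tow2_pos[of "16 * d"]
      by (intro exI[of _ "{}"] exI[of _ "{..<n}"] exI[of _ 0]) auto
  next
    case False
    with large show ?thesis using exists_isolated_outputs_large[OF assms] by simp
  qed
qed

lemma real_le_div_two_powr:
  assumes "c * 2 ^ (28 * t) \<le> r"
  shows "real c \<le> real r / 2 powr (28 * real t - 18)"
proof -
  have "(2::real) powr (28 * real t - 18) \<le> 2 powr (28 * real t)" by (intro powr_mono) auto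
  also have "\<dots> = 2 ^ (28 * t)" by (simp add: powr_realpow[symmetric])
  finally have le: "(2::real) powr (28 * real t - 18) \<le> 2 ^ (28 * t)" .
  have "real (c * 2 ^ (28 * t)) \<le> real r" using assms by (simp only: of_nat_le_iff)
  then have "real c * 2 ^ (28 * t) \<le> real r" by simp
  then have "real c \<le> real r / 2 ^ (28 * t)" by (simp add: pos_le_divide_eq)
  also have "\<dots> \<le> real r / 2 powr (28 * real t - 18)" by (rule divide_left_mono[OF le]) auto
  finally show ?thesis .
qed

theorem mainTheorem14:
  fixes f :: "(nat \<Rightarrow> bool) \<Rightarrow> (nat \<Rightarrow> bool)" and m n d :: nat
  assumes "is_local f {..<m} n d"
  shows "\<exists>S r t. S \<subseteq> {..<m}
    \<and> real (card S) \<le> real r / 2 powr (28 * real t - 18)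
    \<and> real r \<ge> real n / real (tow2 (16 * d))
    \<and> t \<le> tow2 (16 * d)
    \<and> (\<forall>\<rho> \<in> inputs S. drt_local (restr f S \<rho>) ({..<m} - S) n d r t)"
proof -
  have "\<And>i. i < n \<Longrightarrow> dep f {..<m} i \<subseteq> {..<m} \<and> card (dep f {..<m} i) \<le> d"
    using assms unfolding is_local_def dep_def by auto
  note isolated = exists_isolated_outputs[where e = "dep f {..<m}" and d = d, OF finite_lessThan this]
  obtain S A t where "S \<subseteq> {..<m}" and iso: "isolated_outputs (dep f {..<m}) n S t A"
    and cost: "card S * 2 ^ (28 * t) \<le> card A"
    and n_le: "n \<le> card A * tow2 (16 * d)" and "t \<le> tow2 (16 * d)"
    using isolated by blast
  have "real n / real (tow2 (16 * d)) \<le> real (card A)"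
    using n_le tow2_pos[of "16 * d"] by (simp add: divide_le_eq flip: of_nat_mult)
  moreover have "drt_local (restr f S \<rho>) ({..<m} - S) n d (card A) t" if "\<rho> \<in> inputs S" for \<rho>
    using drt_local_restr[OF assms finite_lessThan \<open>S \<subseteq> {..<m}\<close> that iso] .
  ultimately show ?thesis
    using \<open>S \<subseteq> {..<m}\<close> real_le_div_two_powr[OF cost] \<open>t \<le> tow2 (16 * d)\<close> by blast
qed

end
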